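(* The Lie algebra $\mathcal W$ (even part of $W(m,n;\underline t)$, over a field of characteristic $p>3$, $m,n\ge3$) is generated by $\mathcal M\cup\mathcal N\cup\mathcal P$, where $\mathcal M=\{x^{(q\varepsilon_i)}D_j\mid 0\le q\le\pi_i,\ i,j\in Y_0\}$, $\mathcal N=\{x_ix_kD_l\mid i\in Y_0,\ k,l\in Y_1\}$, $\mathcal P=\{x_kx_lD_i\mid i\in Y_0,\ k,l\in Y_1\}$.
   Context: $\mathbb F$ is a field of characteristic $p>3$; $m,n\ge 3$; $\underline t=(t_1,\dots,t_m)$ positive integers, $\pi_i=p^{t_i}-1$. $Y_0=\{1,\dots,m\}$, $Y_1=\{m+1,\dots,m+n\}$, $Y=Y_0\cup Y_1$, $\tau(r)=\bar0$ on $Y_0$, $\bar1$ on $Y_1$. $\mathfrak A=\mathfrak A(m,n;\underline t)$ is the supercommutative superalgebra with basis $x^{(\alpha)}x^u$ ($\alpha\in\mathbb N_0^m$, $\alpha_i\le\pi_i$; $u$ an increasing sequence in $Y_1$, $x^u$ the product of the odd generators $x_k$, $k\in u$), with $x^{(\alpha)}x^{(\beta)}=\prod_i\binom{\alpha_i+\beta_i}{\alpha_i}x^{(\alpha+\beta)}$ (zero if some index exceeds $\pi_i$), anticommuting $x_k$, parity $|u|\bmod2$; $x_i=x^{(\varepsilon_i)}$ for $i\in Y_0$ and $\varepsilon_i$ is the $i$-th unit vector. $D_i$ ($i\in Y_0$) sends $x^{(\alpha)}x^u\mapsto x^{(\alpha-\varepsilon_i)}x^u$, $D_k$ ($k\in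 Y_1$) is the odd partial derivative $\partial/\partial x_k$; $D_r$ has parity $\tau(r)$. $W=W(m,n;\underline t)=\{\sum_{r\in Y} f_rD_r:f_r\in\mathfrak A\}$ with bracket $[fD_r,gD_s]=fD_r(g)D_s-(-1)^{\mathrm p(fD_r)\mathrm p(gD_s)}gD_s(f)D_r$; $x^{(\alpha)}x^uD_r$ has parity $|u|+\tau(r)$. $\mathcal W=W_{\bar0}$. *)

theory Defs
  imports Main "HOL-Computational_Algebra.Primes"
begin

text \<open>Generalized Witt superalgebra W(m,n;t) over a field 'a of characteristic p.
Basis monomials of the divided-power Grassmann superalgebra A(m,n;t) are indexed by
pairs (alpha,u): alpha :: nat => nat (exponent vector, supported in {1..m}, alpha i <= pi i),
u a subset of Y1 = {m+1..m+n} (standing for the increasing sequence of its elements).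
Elements of A are coefficient functions on these indices; elements of W are coefficient
functions on triples (alpha,u,r) standing for x^(alpha) x^u D_r with r in Y = {1..m+n}.\<close>

type_synonym aidx = "(nat \<Rightarrow> nat) \<times> nat set"
type_synonym widx = "(nat \<Rightarrow> nat) \<times> nat set \<times> nat"

definition Y0 :: "nat \<Rightarrow> nat set" where "Y0 m = {1..m}"
definition Y1 :: "nat \<Rightarrow> nat \<Rightarrow> nat set" where "Y1 m n = {m+1..m+n}"
definition Y :: "nat \<Rightarrow> nat \<Rightarrow> nat set" where "Y m n = Y0 m \<union> Y1 m n"

definition tau :: "nat \<Rightarrow> nat \<Rightarrow> nat" where "tau m r = (if r \<le> m then 0 else 1)"

definition piw :: "nat \<Rightarrow> (nat \<Rightarrow> nat) \<Rightarrow> nat \<Rightarrow> nat" where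
  "piw p t i = p ^ t i - 1"

definition ABasis :: "nat \<Rightarrow> nat \<Rightarrow> nat \<Rightarrow> (nat \<Rightarrow> nat) \<Rightarrow> aidx set" where
  "ABasis p m n t = {(\<alpha>, u). (\<forall>i. i \<notin> Y0 m \<longrightarrow> \<alpha> i = 0) \<and>
      (\<forall>i\<in>Y0 m. \<alpha> i \<le> piw p t i) \<and> u \<subseteq> Y1 m n}"

definition WBasis :: "nat \<Rightarrow> nat \<Rightarrow> nat \<Rightarrow> (nat \<Rightarrow> nat) \<Rightarrow> widx set" where
  "WBasis p m n t = {(\<alpha>, u, r). (\<alpha>, u) \<in> ABasis p m n t \<and> r \<in> Y m n}"

text \<open>sign of x^u x^v = sign * x^(u union v) for disjoint u, v: number of inversions\<close>
definition gsign :: "nat set \<Rightarrow> nat set \<Rightarrow> 'a::field" where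
  "gsign u v = (-1) ^ card {(k, l). k \<in> u \<and> l \<in> v \<and> l < k}"

definition mono_mul :: "nat \<Rightarrow> nat \<Rightarrow> (nat \<Rightarrow> nat) \<Rightarrow> aidx \<Rightarrow> aidx \<Rightarrow> aidx \<Rightarrow> 'a::field" where
  "mono_mul p m t a b c = (case a of (\<alpha>, u) \<Rightarrow> case b of (\<beta>, v) \<Rightarrow> case c of (\<gamma>, w) \<Rightarrow>
     (if (\<forall>i\<in>Y0 m. \<alpha> i + \<beta> i \<le> piw p t i) \<and> \<gamma> = (\<lambda>i. \<alpha> i + \<beta> i) \<and> u \<inter> v = {} \<and> w = u \<union> v
      then of_nat (\<Prod>i\<in>Y0 m. (\<alpha> i + \<beta> i) choose \<alpha> i) * gsign u v else 0))"

definition amul :: "nat \<Rightarrow> nat \<Rightarrow> nat \<Rightarrow> (nat \<Rightarrow> nat) \<Rightarrow> (aidx \<Rightarrow> 'a::field) \<Rightarrow> (aidx \<Rightarrow> 'a) \<Rightarrow> aidx \<Rightarrow> 'a" where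
  "amul p m n t f g c = (\<Sum>a\<in>ABasis p m n t. \<Sum>b\<in>ABasis p m n t. f a * g b * mono_mul p m t a b c)"

definition deriv_mono :: "nat \<Rightarrow> nat \<Rightarrow> aidx \<Rightarrow> aidx \<Rightarrow> 'a::field" where
  "deriv_mono m r a c = (case a of (\<alpha>, u) \<Rightarrow> case c of (\<gamma>, w) \<Rightarrow>
     (if r \<in> Y0 m then (if 1 \<le> \<alpha> r \<and> \<gamma> = \<alpha>(r := \<alpha> r - 1) \<and> w = u then 1 else 0)
      else (if r \<in> u \<and> \<gamma> = \<alpha> \<and> w = u - {r} then (-1) ^ card {l\<in>u. l < r} else 0)))"

definition aderiv :: "nat \<Rightarrow> nat \<Rightarrow> nat \<Rightarrow> (nat \<Rightarrow> nat) \<Rightarrow> nat \<Rightarrow> (aidx \<Rightarrow> 'a::field) \<Rightarrow> aidx \<Rightarrow> 'a" where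
  "aderiv p m n t r f c = (\<Sum>a\<in>ABasis p m n t. f a * deriv_mono m r a c)"

definition amono :: "aidx \<Rightarrow> aidx \<Rightarrow> 'a::field" where
  "amono a c = (if c = a then 1 else 0)"

text \<open>the element f D_r of W, for f in A\<close>
definition aD :: "(aidx \<Rightarrow> 'a::field) \<Rightarrow> nat \<Rightarrow> widx \<Rightarrow> 'a" where
  "aD f r c = (case c of (\<gamma>, w, s) \<Rightarrow> if s = r then f (\<gamma>, w) else 0)"

definition bracket_basis :: "nat \<Rightarrow> nat \<Rightarrow> nat \<Rightarrow> (nat \<Rightarrow> nat) \<Rightarrow> widx \<Rightarrow> widx \<Rightarrow> widx \<Rightarrow> 'a::field" where
  "bracket_basis p m n t a b = (case a of (\<alpha>, u, r) \<Rightarrow> case b of (\<beta>, v, s) \<Rightarrow>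
     (\<lambda>c. aD (amul p m n t (amono (\<alpha>, u)) (aderiv p m n t r (amono (\<beta>, v)))) s c
        - (-1) ^ ((card u + tau m r) * (card v + tau m s))
          * aD (amul p m n t (amono (\<beta>, v)) (aderiv p m n t s (amono (\<alpha>, u)))) r c))"

definition wbracket :: "nat \<Rightarrow> nat \<Rightarrow> nat \<Rightarrow> (nat \<Rightarrow> nat) \<Rightarrow> (widx \<Rightarrow> 'a::field) \<Rightarrow> (widx \<Rightarrow> 'a) \<Rightarrow> widx \<Rightarrow> 'a" where
  "wbracket p m n t X Z c = (\<Sum>a\<in>WBasis p m n t. \<Sum>b\<in>WBasis p m n t. X a * Z b * bracket_basis p m n t a b c)"

definition Wsp :: "nat \<Rightarrow> nat \<Rightarrow> nat \<Rightarrow> (nat \<Rightarrow> nat) \<Rightarrow> (widx \<Rightarrow> 'a::field) set" where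
  "Wsp p m n t = {X. \<forall>c. c \<notin> WBasis p m n t \<longrightarrow> X c = 0}"

definition Weven :: "nat \<Rightarrow> nat \<Rightarrow> nat \<Rightarrow> (nat \<Rightarrow> nat) \<Rightarrow> (widx \<Rightarrow> 'a::field) set" where
  "Weven p m n t = {X \<in> Wsp p m n t. \<forall>\<alpha> u r. X (\<alpha>, u, r) \<noteq> 0 \<longrightarrow> even (card u + tau m r)}"

inductive_set lie_gen :: "nat \<Rightarrow> nat \<Rightarrow> nat \<Rightarrow> (nat \<Rightarrow> nat) \<Rightarrow> (widx \<Rightarrow> 'a::field) set \<Rightarrow> (widx \<Rightarrow> 'a) set"
  for p m n t S where
  gen_base: "X \<in> S \<Longrightarrow> X \<in> lie_gen p m n t S"
| gen_zero: "(\<lambda>c. 0) \<in> lie_gen p m n t S"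
| gen_add: "X \<in> lie_gen p m n t S \<Longrightarrow> Z \<in> lie_gen p m n t S \<Longrightarrow> (\<lambda>c. X c + Z c) \<in> lie_gen p m n t S"
| gen_smult: "X \<in> lie_gen p m n t S \<Longrightarrow> (\<lambda>c. k * X c) \<in> lie_gen p m n t S"
| gen_bracket: "X \<in> lie_gen p m n t S \<Longrightarrow> Z \<in> lie_gen p m n t S \<Longrightarrow> wbracket p m n t X Z \<in> lie_gen p m n t S"

definition dpow :: "nat \<Rightarrow> nat \<Rightarrow> aidx \<Rightarrow> 'a::field" where
  "dpow q i = amono ((\<lambda>j. if j = i then q else 0), {})"

definition xgen :: "nat \<Rightarrow> nat \<Rightarrow> aidx \<Rightarrow> 'a::field" where
  "xgen m k = (if k \<le> m then dpow 1 k else amono ((\<lambda>j. 0), {k}))"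

definition Mset :: "nat \<Rightarrow> nat \<Rightarrow> nat \<Rightarrow> (nat \<Rightarrow> nat) \<Rightarrow> (widx \<Rightarrow> 'a::field) set" where
  "Mset p m n t = {aD (dpow q i) j | q i j. i \<in> Y0 m \<and> j \<in> Y0 m \<and> q \<le> piw p t i}"

definition Nset :: "nat \<Rightarrow> nat \<Rightarrow> nat \<Rightarrow> (nat \<Rightarrow> nat) \<Rightarrow> (widx \<Rightarrow> 'a::field) set" where
  "Nset p m n t = {aD (amul p m n t (xgen m i) (xgen m k)) l | i k l.
      i \<in> Y0 m \<and> k \<in> Y1 m n \<and> l \<in> Y1 m n}"

definition Pset :: "nat \<Rightarrow> nat \<Rightarrow> nat \<Rightarrow> (nat \<Rightarrow> nat) \<Rightarrow> (widx \<Rightarrow> 'a::field) set" where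
  "Pset p m n t = {aD (amul p m n t (xgen m k) (xgen m l)) i | i k l.
      i \<in> Y0 m \<and> k \<in> Y1 m n \<and> l \<in> Y1 m n}"

end

theory Submission
  imports Defs
begin

text \<open>Every even basis vector x^(\<alpha>) x^u D_r is reached by brackets of basis vectors in which one
  half of the supercommutator vanishes, so that the other half is a signed basis vector.
  For r \<in> Y0 (so |u| even), brackets with x_k x_l D_j turn x_j x^u D_r into
  \<plusminus>x_k x_l x^u D_r, and brackets with x^(q\<epsilon>_i) D_i, x_i D_r and x^(q\<epsilon>_r) D_r build up the exponent
  \<alpha> one coordinate at a time; only the top exponent \<alpha>_r = \<pi>_r needs a bracket with two
  surviving halves. For r \<in> Y1, the bracket of x^(\<alpha>) x^u D_1 with x_1 x_k D_r adjoins x_k.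
  Conversely the bracket adds the parities |u| + \<tau>(r), so the generated subalgebra lies in W_0.\<close>

lemma finite_ABasis: "finite (ABasis p m n t)"
proof -
  let ?F = "{f::nat \<Rightarrow> nat. \<forall>x. (x \<in> Y0 m \<longrightarrow> f x \<in> {0..Max (piw p t ` Y0 m)}) \<and> (x \<notin> Y0 m \<longrightarrow> f x = 0)}"
  have "finite ?F" by (rule finite_set_of_finite_funs) (auto simp: Y0_def)
  then have "finite (?F \<times> Pow (Y1 m n))" by (simp add: Y1_def)
  moreover have "piw p t i \<le> Max (piw p t ` Y0 m)" if "i \<in> Y0 m" for i
    using that by (intro Max_ge) (auto simp: Y0_def)
  then have "ABasis p m n t \<subseteq> ?F \<times> Pow (Y1 m n)"
    by (fastforce simp: ABasis_def intro: order_trans)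
  ultimately show ?thesis by (rule finite_subset[rotated])
qed

lemma finite_WBasis: "finite (WBasis p m n t)"
proof -
  have "WBasis p m n t = (\<lambda>((\<alpha>, u), r). (\<alpha>, u, r)) ` (ABasis p m n t \<times> Y m n)"
    by (force simp: WBasis_def)
  then show ?thesis using finite_ABasis by (simp add: Y_def Y0_def Y1_def)
qed

lemma sum_delta_mult:
  assumes "finite A" "x \<in> A"
  shows "(\<Sum>a\<in>A. (if a = x then 1 else 0) * f a) = (f x :: 'a::comm_ring_1)"
  using assms by (simp add: if_distrib[where f = "\<lambda>z. z * _"] cong: if_cong)

definition wunit :: "widx \<Rightarrow> widx \<Rightarrow> 'a::field" where
  "wunit a c = (if c = a then 1 else 0)"

definition unit_exp :: "nat \<Rightarrow> nat \<Rightarrow> nat \<Rightarrow> nat" where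
  "unit_exp q i = (\<lambda>j. if j = i then q else 0)"

lemma unit_exp_apply [simp]: "unit_exp q i j = (if j = i then q else 0)"
  by (simp add: unit_exp_def)

lemma unit_exp_upd [simp]: "(unit_exp q i)(i := q') = unit_exp q' i"
  by (auto simp: fun_eq_iff)

lemma unit_exp_0 [simp]: "unit_exp 0 i = (\<lambda>j. 0)"
  by (simp add: fun_eq_iff)

lemma zero_upd_eq_unit_exp [simp]: "(\<lambda>j. 0)(i := q) = unit_exp q i"
  by (simp add: fun_eq_iff)

lemma mem_WBasis_iff:
  "(\<alpha>, u, r) \<in> WBasis p m n t \<longleftrightarrow>
     (\<forall>i. i \<notin> Y0 m \<longrightarrow> \<alpha> i = 0) \<and> (\<forall>i\<in>Y0 m. \<alpha> i \<le> piw p t i) \<and> u \<subseteq> Y1 m n \<and> r \<in> Y m n"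
  by (auto simp: WBasis_def ABasis_def)

lemma mem_ABasis_iff:
  "(\<alpha>, u) \<in> ABasis p m n t \<longleftrightarrow>
     (\<forall>i. i \<notin> Y0 m \<longrightarrow> \<alpha> i = 0) \<and> (\<forall>i\<in>Y0 m. \<alpha> i \<le> piw p t i) \<and> u \<subseteq> Y1 m n"
  by (simp add: ABasis_def)

lemma unit_exp_mem_WBasis:
  "i \<in> Y0 m \<Longrightarrow> q \<le> piw p t i \<Longrightarrow> u \<subseteq> Y1 m n \<Longrightarrow> r \<in> Y m n \<Longrightarrow> (unit_exp q i, u, r) \<in> WBasis p m n t"
  by (auto simp: mem_WBasis_iff)

lemma fun_upd_mem_WBasis:
  "(\<alpha>, u, r) \<in> WBasis p m n t \<Longrightarrow> i \<in> Y0 m \<Longrightarrow> q \<le> piw p t i \<Longrightarrow> (\<alpha>(i := q), u, r) \<in> WBasis p m n t"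
  by (auto simp: mem_WBasis_iff)

lemma Y0_Y1_bounds: "i \<in> Y0 m \<Longrightarrow> i \<le> m" "k \<in> Y1 m n \<Longrightarrow> \<not> k \<le> m" "k \<in> Y1 m n \<Longrightarrow> k \<notin> Y0 m"
  by (auto simp: Y0_def Y1_def)

lemma wbracket_wunit:
  assumes "a \<in> WBasis p m n t" "b \<in> WBasis p m n t"
  shows "wbracket p m n t (wunit a) (wunit b) = bracket_basis p m n t a b"
proof
  fix c
  have "wbracket p m n t (wunit a) (wunit b) c = (\<Sum>x\<in>WBasis p m n t. (if x = a then 1 else 0) *
          (\<Sum>y\<in>WBasis p m n t. (if y = b then 1 else 0) * bracket_basis p m n t x y c))"
    unfolding wbracket_def wunit_def by (simp add: sum_distrib_left mult.assoc)
  then show "wbracket p m n t (wunit a) (wunit b) c = bracket_basis p m n t a b c"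
    by (simp add: sum_delta_mult[OF finite_WBasis] assms)
qed

lemma aderiv_amono:
  "x \<in> ABasis p m n t \<Longrightarrow> aderiv p m n t r (amono x) = deriv_mono m r x"
  unfolding aderiv_def amono_def fun_eq_iff by (simp add: sum_delta_mult[OF finite_ABasis])

lemma amul_amono:
  "x \<in> ABasis p m n t \<Longrightarrow> amul p m n t (amono x) g c = (\<Sum>b\<in>ABasis p m n t. g b * mono_mul p m t x b c)"
  unfolding amul_def amono_def
  by (simp add: mult.assoc sum_distrib_left[symmetric] sum_delta_mult[OF finite_ABasis])

lemma amul_amono_amono:
  "x \<in> ABasis p m n t \<Longrightarrow> y \<in> ABasis p m n t \<Longrightarrow> amul p m n t (amono x) (amono y) = mono_mul p m t x y"
  unfolding fun_eq_iff by (simp add: amul_amono amono_def sum_delta_mult[OF finite_ABasis])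

lemma mono_mul_disjoint:
  assumes "(\<alpha>, u) \<in> ABasis p m n t" "(\<beta>, v) \<in> ABasis p m n t"
    and "\<forall>i\<in>Y0 m. \<alpha> i = 0 \<or> \<beta> i = 0" "u \<inter> v = {}"
  shows "mono_mul p m t (\<alpha>, u) (\<beta>, v) =
           (\<lambda>c. if c = ((\<lambda>i. \<alpha> i + \<beta> i), u \<union> v) then gsign u v else (0::'a::field))"
proof
  fix c :: aidx
  have "\<forall>i\<in>Y0 m. \<alpha> i + \<beta> i \<le> piw p t i" using assms(1-3) by (auto simp: ABasis_def)
  moreover have "(\<Prod>i\<in>Y0 m. (\<alpha> i + \<beta> i) choose \<alpha> i) = 1"
    using assms(3) by (intro prod.neutral) auto
  ultimately show "mono_mul p m t (\<alpha>, u) (\<beta>, v) c =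
      (if c = ((\<lambda>i. \<alpha> i + \<beta> i), u \<union> v) then gsign u v else 0)"
    using assms(4) by (cases c) (auto simp: mono_mul_def)
qed

lemma aD_amono: "aD (amono (\<alpha>, u)) r = wunit (\<alpha>, u, r)"
  by (auto simp: aD_def amono_def wunit_def fun_eq_iff)

lemma aD_single: "aD (\<lambda>c. if c = (\<gamma>, w) then k else 0) s = (\<lambda>c. k * (wunit (\<gamma>, w, s) c :: 'a::field))"
  by (auto simp: aD_def wunit_def fun_eq_iff)

lemma gsign_nonzero: "gsign u v \<noteq> (0::'a::field)"
  by (simp add: gsign_def)

lemma gsign_empty [simp]: "gsign {} v = 1" "gsign u {} = 1"
  by (simp_all add: gsign_def)

definition prelie_basis :: "nat \<Rightarrow> nat \<Rightarrow> nat \<Rightarrow> (nat \<Rightarrow> nat) \<Rightarrow> widx \<Rightarrow> widx \<Rightarrow> widx \<Rightarrow> 'a::field" where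
  "prelie_basis p m n t a b = (case a of (\<alpha>, u, r) \<Rightarrow> case b of (\<beta>, v, s) \<Rightarrow>
     aD (amul p m n t (amono (\<alpha>, u)) (aderiv p m n t r (amono (\<beta>, v)))) s)"

lemma bracket_basis_prelie:
  "bracket_basis p m n t (\<alpha>, u, r) (\<beta>, v, s) =
    (\<lambda>c. prelie_basis p m n t (\<alpha>, u, r) (\<beta>, v, s) c
       - (-1) ^ ((card u + tau m r) * (card v + tau m s)) * prelie_basis p m n t (\<beta>, v, s) (\<alpha>, u, r) c)"
  by (simp add: bracket_basis_def prelie_basis_def)

lemma prelie_basis_eq_0:
  assumes "(r \<in> Y0 m \<and> \<beta> r = 0) \<or> (r \<notin> Y0 m \<and> r \<notin> v)" "(\<beta>, v) \<in> ABasis p m n t"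
  shows "prelie_basis p m n t (\<alpha>, u, r) (\<beta>, v, s) = (\<lambda>c. 0 :: 'a::field)"
proof -
  have deriv_zero: "aderiv p m n t r (amono (\<beta>, v)) = (\<lambda>c. 0 :: 'a)"
    using assms by (auto simp: aderiv_amono deriv_mono_def)
  show ?thesis by (simp add: prelie_basis_def deriv_zero amul_def aD_def fun_eq_iff)
qed

lemma prelie_basis_even_deriv:
  assumes "r \<in> Y0 m" "(\<alpha>, u) \<in> ABasis p m n t" "(\<beta>, v) \<in> ABasis p m n t" "1 \<le> \<beta> r"
    and "\<forall>i\<in>Y0 m. \<alpha> i = 0 \<or> (\<beta>(r := \<beta> r - 1)) i = 0" "u \<inter> v = {}"
  shows "prelie_basis p m n t (\<alpha>, u, r) (\<beta>, v, s) =
           (\<lambda>c. gsign u v * (wunit ((\<lambda>i. \<alpha> i + (\<beta>(r := \<beta> r - 1)) i), u \<union> v, s) c :: 'a::field))"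
proof -
  have lowered: "(\<beta>(r := \<beta> r - 1), v) \<in> ABasis p m n t" using assms(1,3) by (auto simp: ABasis_def)
  have "deriv_mono m r (\<beta>, v) = (amono (\<beta>(r := \<beta> r - 1), v) :: aidx \<Rightarrow> 'a)"
    using assms(1,4) by (auto simp: deriv_mono_def amono_def fun_eq_iff)
  then show ?thesis
    using assms(2,3,5,6) lowered
    by (simp add: prelie_basis_def aderiv_amono amul_amono_amono mono_mul_disjoint aD_single)
qed

lemma lie_gen_smult_cancel:
  assumes "(\<lambda>c. k * X c) \<in> lie_gen p m n t S" "k \<noteq> (0::'a::field)"
  shows "X \<in> lie_gen p m n t S"
proof -
  have "(\<lambda>c. inverse k * (k * X c)) \<in> lie_gen p m n t S"
    using assms(1) by (rule lie_gen.gen_smult)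
  moreover have "(\<lambda>c. inverse k * (k * X c)) = X"
    using assms(2) by (simp add: fun_eq_iff mult.assoc[symmetric])
  ultimately show ?thesis by simp
qed

lemma wunit_in_lie_gen_by_prelie:
  assumes "a \<in> WBasis p m n t" "b \<in> WBasis p m n t"
    and "wunit a \<in> lie_gen p m n t S" "wunit b \<in> lie_gen p m n t S"
    and "prelie_basis p m n t a b = (\<lambda>c. k * (wunit e c :: 'a::field))"
    and "prelie_basis p m n t b a = (\<lambda>c. 0 :: 'a)" "k \<noteq> 0"
  shows "(wunit e :: widx \<Rightarrow> 'a) \<in> lie_gen p m n t S"
proof -
  obtain \<alpha> u r \<beta> v s where ab: "a = (\<alpha>, u, r)" "b = (\<beta>, v, s)" by (metis prod_cases3)
  have "wbracket p m n t (wunit a) (wunit b) = bracket_basis p m n t a b"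
    using assms(1,2) by (rule wbracket_wunit)
  also have "\<dots> = (\<lambda>c. k * wunit e c)"
    using assms(5,6) by (simp add: ab bracket_basis_prelie)
  finally have "wbracket p m n t (wunit a) (wunit b) = (\<lambda>c. k * wunit e c)" .
  then have "(\<lambda>c. k * wunit e c) \<in> lie_gen p m n t S"
    by (metis assms(3,4) lie_gen.gen_bracket)
  then show ?thesis using assms(7) by (rule lie_gen_smult_cancel)
qed

lemma lie_gen_sum_wunit:
  assumes "finite A" "\<And>a. a \<in> A \<Longrightarrow> (wunit a :: widx \<Rightarrow> 'a::field) \<in> lie_gen p m n t S"
  shows "(\<lambda>c. \<Sum>a\<in>A. f a * wunit a c) \<in> lie_gen p m n t S"
  using assms
proof (induction A rule: finite_induct)
  case empty
  show ?case using lie_gen.gen_zero by simp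
next
  case (insert x A)
  have "(\<lambda>c. f x * wunit x c + (\<Sum>a\<in>A. f a * wunit a c)) \<in> lie_gen p m n t S"
    using insert by (intro lie_gen.gen_add lie_gen.gen_smult) auto
  then show ?case using insert(1,2) by simp
qed

lemma aD_dpow: "aD (dpow q i) j = wunit (unit_exp q i, {}, j)"
  by (simp add: dpow_def aD_amono unit_exp_def)

lemma aD_xgen_even_odd:
  assumes "i \<in> Y0 m" "k \<in> Y1 m n" "1 \<le> piw p t i"
  shows "aD (amul p m n t (xgen m i) (xgen m k)) l = wunit (unit_exp 1 i, {k}, l)"
proof -
  have xgen: "xgen m i = amono (unit_exp 1 i, {})" "xgen m k = amono (\<lambda>j. 0, {k})"
    using assms by (simp_all add: xgen_def dpow_def Y0_Y1_bounds unit_exp_def)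
  have basis: "(unit_exp 1 i, {}) \<in> ABasis p m n t" "((\<lambda>j. 0), {k}) \<in> ABasis p m n t"
    using assms by (auto simp: mem_ABasis_iff Y0_Y1_bounds)
  have "(\<lambda>j. unit_exp 1 i j + 0) = unit_exp 1 i" by auto
  then show ?thesis unfolding xgen amul_amono_amono[OF basis]
    by (subst mono_mul_disjoint[OF basis]) (auto simp: aD_single)
qed

lemma aD_xgen_odd_odd:
  assumes "k \<in> Y1 m n" "l \<in> Y1 m n"
  shows "aD (amul p m n t (xgen m k) (xgen m l)) i =
           (if k = l then (\<lambda>c. 0) else (\<lambda>c. gsign {k} {l} * wunit ((\<lambda>j. 0), {k, l}, i) c))"
proof -
  have xgen: "xgen m k = amono (\<lambda>j. 0, {k})" "xgen m l = amono (\<lambda>j. 0, {l})"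
    using assms by (simp_all add: xgen_def Y0_Y1_bounds)
  have basis: "((\<lambda>j. 0), {k}) \<in> ABasis p m n t" "((\<lambda>j. 0), {l}) \<in> ABasis p m n t"
    using assms by (auto simp: mem_ABasis_iff)
  show ?thesis
  proof (cases "k = l")
    case True
    then show ?thesis unfolding xgen amul_amono_amono[OF basis]
      by (auto simp: fun_eq_iff aD_def mono_mul_def split: prod.splits)
  next
    case False
    then show ?thesis unfolding xgen amul_amono_amono[OF basis]
      by (subst mono_mul_disjoint[OF basis]) (auto simp: aD_single insert_commute)
  qed
qed

definition even_index :: "nat \<Rightarrow> widx \<Rightarrow> bool" where
  "even_index m c = (case c of (\<alpha>, u, r) \<Rightarrow> even (card u + tau m r))"

locale witt_setting =
  fixes p m n :: nat and t :: "nat \<Rightarrow> nat"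
  assumes piw_ge_3: "i \<in> Y0 m \<Longrightarrow> 3 \<le> piw p t i"
    and two_le_m: "2 \<le> m"
begin

abbreviation generators :: "(widx \<Rightarrow> 'a::field) set" where
  "generators \<equiv> Mset p m n t \<union> Nset p m n t \<union> Pset p m n t"

abbreviation L :: "(widx \<Rightarrow> 'a::field) set" where
  "L \<equiv> lie_gen p m n t generators"

lemma exists_other_Y0: "r \<in> Y0 m \<Longrightarrow> \<exists>j\<in>Y0 m. j \<noteq> r"
  using two_le_m by (cases "r = 1") (auto simp: Y0_def intro: bexI[of _ 1] bexI[of _ 2])

lemma wunit_Mset_in_L:
  assumes "i \<in> Y0 m" "j \<in> Y0 m" "q \<le> piw p t i"
  shows "wunit (unit_exp q i, {}, j) \<in> L"
proof -
  have "aD (dpow q i) j \<in> Mset p m n t" unfolding Mset_def using assms by blast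
  then show ?thesis by (auto simp: aD_dpow intro: lie_gen.gen_base)
qed

lemma wunit_Nset_in_L:
  assumes "i \<in> Y0 m" "k \<in> Y1 m n" "l \<in> Y1 m n"
  shows "wunit (unit_exp 1 i, {k}, l) \<in> L"
proof -
  have "aD (amul p m n t (xgen m i) (xgen m k)) l \<in> Nset p m n t" unfolding Nset_def using assms by blast
  then show ?thesis using assms piw_ge_3[of i] by (auto simp: aD_xgen_even_odd intro: lie_gen.gen_base)
qed

lemma wunit_Pset_in_L:
  assumes "i \<in> Y0 m" "k \<in> Y1 m n" "l \<in> Y1 m n" "k \<noteq> l"
  shows "wunit ((\<lambda>j. 0), {k, l}, i) \<in> L"
proof -
  have "aD (amul p m n t (xgen m k) (xgen m l)) i \<in> Pset p m n t" unfolding Pset_def using assms by blast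
  then have "(\<lambda>c. gsign {k} {l} * wunit ((\<lambda>j. 0), {k, l}, i) c) \<in> L"
    using assms by (auto simp: aD_xgen_odd_odd intro: lie_gen.gen_base)
  then show ?thesis using gsign_nonzero by (rule lie_gen_smult_cancel)
qed

lemma wunit_raise_exp:
  assumes i: "i \<in> Y0 m" and r: "r \<in> Y m n" "r \<noteq> i" and B: "(\<beta>, u, r) \<in> WBasis p m n t"
    and "\<beta> i = 1" and q: "q \<le> piw p t i" and "(wunit (\<beta>, u, r) :: widx \<Rightarrow> 'a::field) \<in> L"
  shows "(wunit (\<beta>(i := q), u, r) :: widx \<Rightarrow> 'a) \<in> L"
proof (rule wunit_in_lie_gen_by_prelie[where a = "(unit_exp q i, {}, i)" and b = "(\<beta>, u, r)"])
  show "(unit_exp q i, {}, i) \<in> WBasis p m n t" using i q by (auto simp: mem_WBasis_iff Y_def)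
  have "(\<lambda>k. unit_exp q i k + (\<beta>(i := \<beta> i - 1)) k) = \<beta>(i := q)" using \<open>\<beta> i = 1\<close> by auto
  then show "prelie_basis p m n t (unit_exp q i, {}, i) (\<beta>, u, r) = (\<lambda>c. 1 * wunit (\<beta>(i := q), u, r) c)"
    using i q B \<open>\<beta> i = 1\<close>
    by (subst prelie_basis_even_deriv) (auto simp: mem_ABasis_iff WBasis_def)
  show "prelie_basis p m n t (\<beta>, u, r) (unit_exp q i, {}, i) = (\<lambda>c. 0)"
    using r i q by (intro prelie_basis_eq_0) (auto simp: mem_ABasis_iff)
qed (use assms wunit_Mset_in_L[OF i i q] in simp_all)

lemma wunit_move_exp:
  assumes i: "i \<in> Y0 m" and r: "r \<in> Y0 m" "r \<noteq> i" and B: "(\<beta>, u, r) \<in> WBasis p m n t"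
    and "\<beta> r = 1" "\<beta> i = 0" and "(wunit (\<beta>, u, r) :: widx \<Rightarrow> 'a::field) \<in> L"
  shows "(wunit (\<beta>(r := 0, i := 1), u, r) :: widx \<Rightarrow> 'a) \<in> L"
proof (rule wunit_in_lie_gen_by_prelie[where a = "(unit_exp 1 i, {}, r)" and b = "(\<beta>, u, r)"])
  show "(unit_exp 1 i, {}, r) \<in> WBasis p m n t"
    using i r piw_ge_3[OF i] by (auto simp: mem_WBasis_iff Y_def)
  have "(\<lambda>k. unit_exp 1 i k + (\<beta>(r := \<beta> r - 1)) k) = \<beta>(r := 0, i := 1)"
    using assms(5,6) r by auto
  then show "prelie_basis p m n t (unit_exp 1 i, {}, r) (\<beta>, u, r) = (\<lambda>c. 1 * wunit (\<beta>(r := 0, i := 1), u, r) c)"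
    using i r piw_ge_3[OF i] B assms(5,6)
    by (subst prelie_basis_even_deriv) (auto simp: mem_ABasis_iff WBasis_def)
  show "prelie_basis p m n t (\<beta>, u, r) (unit_exp 1 i, {}, r) = (\<lambda>c. 0)"
    using r i piw_ge_3[OF i] by (intro prelie_basis_eq_0) (auto simp: mem_ABasis_iff)
  show "wunit (unit_exp 1 i, {}, r) \<in> L"
    using piw_ge_3[OF i] by (intro wunit_Mset_in_L i r) simp
qed (use assms in simp_all)

lemma wunit_set_own_exp:
  assumes r: "r \<in> Y0 m" and B: "(\<beta>, u, r) \<in> WBasis p m n t"
    and "\<beta> r = 0" and q: "q < piw p t r" and "(wunit (\<beta>, u, r) :: widx \<Rightarrow> 'a::field) \<in> L"
  shows "(wunit (\<beta>(r := q), u, r) :: widx \<Rightarrow> 'a) \<in> L"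
proof (rule wunit_in_lie_gen_by_prelie[where a = "(\<beta>, u, r)" and b = "(unit_exp (q + 1) r, {}, r)"])
  show "(unit_exp (q + 1) r, {}, r) \<in> WBasis p m n t" using r q by (auto simp: mem_WBasis_iff Y_def)
  have "(\<lambda>k. \<beta> k + ((unit_exp (q + 1) r)(r := q)) k) = \<beta>(r := q)" using \<open>\<beta> r = 0\<close> by auto
  then show "prelie_basis p m n t (\<beta>, u, r) (unit_exp (q + 1) r, {}, r) = (\<lambda>c. 1 * wunit (\<beta>(r := q), u, r) c)"
    using r q B \<open>\<beta> r = 0\<close>
    by (subst prelie_basis_even_deriv) (auto simp: mem_ABasis_iff WBasis_def)
  show "prelie_basis p m n t (unit_exp (q + 1) r, {}, r) (\<beta>, u, r) = (\<lambda>c. 0)"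
    using r B \<open>\<beta> r = 0\<close> by (intro prelie_basis_eq_0) (auto simp: WBasis_def)
qed (use assms wunit_Mset_in_L[OF r r, of "q + 1"] in simp_all)

lemma wunit_adjoin_odd_pair:
  assumes j: "j \<in> Y0 m" and r: "r \<in> Y0 m" "r \<noteq> j" and kl: "k \<in> Y1 m n" "l \<in> Y1 m n" "k \<noteq> l"
    and u: "k \<notin> u" "l \<notin> u" "u \<subseteq> Y1 m n" and "(wunit (unit_exp 1 j, u, r) :: widx \<Rightarrow> 'a::field) \<in> L"
  shows "(wunit ((\<lambda>i. 0), insert k (insert l u), r) :: widx \<Rightarrow> 'a) \<in> L"
proof (rule wunit_in_lie_gen_by_prelie[where a = "((\<lambda>i. 0), {k, l}, j)" and b = "(unit_exp 1 j, u, r)"])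
  show "((\<lambda>i. 0), {k, l}, j) \<in> WBasis p m n t" using j kl by (auto simp: mem_WBasis_iff Y_def)
  show "(unit_exp 1 j, u, r) \<in> WBasis p m n t"
    using j r u piw_ge_3[OF j] by (auto simp: mem_WBasis_iff Y_def)
  show "prelie_basis p m n t ((\<lambda>i. 0), {k, l}, j) (unit_exp 1 j, u, r) =
          (\<lambda>c. gsign {k, l} u * wunit ((\<lambda>i. 0), insert k (insert l u), r) c)"
    using j kl u piw_ge_3[OF j]
    by (subst prelie_basis_even_deriv) (auto simp: mem_ABasis_iff)
  show "prelie_basis p m n t (unit_exp 1 j, u, r) ((\<lambda>i. 0), {k, l}, j) = (\<lambda>c. 0)"
    using r j kl by (intro prelie_basis_eq_0) (auto simp: mem_ABasis_iff)
qed (use assms wunit_Pset_in_L[OF j kl] gsign_nonzero in simp_all)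

lemma wunit_adjoin_odd:
  assumes j: "j \<in> Y0 m" and kl: "k \<in> Y1 m n" "l \<in> Y1 m n" and "k \<notin> u" "l \<notin> u"
    and B: "(\<beta>, u, j) \<in> WBasis p m n t" and "(wunit (\<beta>, u, j) :: widx \<Rightarrow> 'a::field) \<in> L"
  shows "(wunit (\<beta>, insert k u, l) :: widx \<Rightarrow> 'a) \<in> L"
proof (rule wunit_in_lie_gen_by_prelie[where a = "(\<beta>, u, j)" and b = "(unit_exp 1 j, {k}, l)"])
  show "(unit_exp 1 j, {k}, l) \<in> WBasis p m n t"
    using j kl piw_ge_3[OF j] by (auto simp: mem_WBasis_iff Y_def)
  show "prelie_basis p m n t (\<beta>, u, j) (unit_exp 1 j, {k}, l) = (\<lambda>c. gsign u {k} * wunit (\<beta>, insert k u, l) c)"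
    using j kl assms(4) B piw_ge_3[OF j]
    by (subst prelie_basis_even_deriv) (auto simp: mem_ABasis_iff WBasis_def)
  show "prelie_basis p m n t (unit_exp 1 j, {k}, l) (\<beta>, u, j) = (\<lambda>c. 0)"
    using kl assms(5) B by (intro prelie_basis_eq_0) (auto simp: WBasis_def Y0_Y1_bounds)
qed (use assms wunit_Nset_in_L[OF j kl] gsign_nonzero in simp_all)

text \<open>The top exponent \<pi>_r at the derivation index r is out of reach of one-sided brackets;
  in the bracket with x^(\<pi>_r \<epsilon>_r) D_j both halves survive, and the second is already generated.\<close>

lemma wunit_top_exp:
  assumes j: "j \<in> Y0 m" and r: "r \<in> Y0 m" "r \<noteq> j" and B: "(\<alpha>, u, r) \<in> WBasis p m n t"
    and top: "\<alpha> r = piw p t r" and "\<alpha> j = 1"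
    and L1: "(wunit (\<alpha>(r := 0, j := 2), u, r) :: widx \<Rightarrow> 'a::field) \<in> L"
    and L2: "(wunit (\<alpha>(j := 2, r := piw p t r - 1), u, j) :: widx \<Rightarrow> 'a) \<in> L"
  shows "(wunit (\<alpha>, u, r) :: widx \<Rightarrow> 'a) \<in> L"
proof -
  let ?g = "(unit_exp (piw p t r) r, {}, j)" and ?b = "(\<alpha>(r := 0, j := 2), u, r)"
  have g: "?g \<in> WBasis p m n t" using j r by (auto simp: mem_WBasis_iff Y_def)
  have b: "?b \<in> WBasis p m n t" using B j r piw_ge_3[OF j] by (auto simp: mem_WBasis_iff)
  have "(\<lambda>k. unit_exp (piw p t r) r k + (\<alpha>(r := 0, j := 1)) k) = \<alpha>"
    using top \<open>\<alpha> j = 1\<close> r by auto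
  then have first: "prelie_basis p m n t ?g ?b = (\<lambda>c. 1 * wunit (\<alpha>, u, r) c :: 'a)"
    using g b j r by (subst prelie_basis_even_deriv) (auto simp: WBasis_def)
  have "(\<lambda>k. (\<alpha>(r := 0, j := 2)) k + unit_exp (piw p t r - 1) r k) = \<alpha>(j := 2, r := piw p t r - 1)"
    using r by auto
  then have second: "prelie_basis p m n t ?b ?g = (\<lambda>c. 1 * wunit (\<alpha>(j := 2, r := piw p t r - 1), u, j) c :: 'a)"
    using g b j r piw_ge_3[OF r(1)] by (subst prelie_basis_even_deriv) (auto simp: WBasis_def)
  have "wbracket p m n t (wunit ?g) (wunit ?b) =
          (\<lambda>c. wunit (\<alpha>, u, r) c - (wunit (\<alpha>(j := 2, r := piw p t r - 1), u, j) c :: 'a))"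
    using j r by (simp add: wbracket_wunit[OF g b] bracket_basis_prelie first second tau_def Y0_Y1_bounds)
  moreover have "(wbracket p m n t (wunit ?g) (wunit ?b) :: widx \<Rightarrow> 'a) \<in> L"
    using lie_gen.gen_bracket[OF wunit_Mset_in_L[OF r(1) j order.refl] L1] by simp
  ultimately show ?thesis using lie_gen.gen_add[OF _ L2] by fastforce
qed

lemma wunit_even_const:
  assumes "even (card u)" "u \<subseteq> Y1 m n" "r \<in> Y0 m"
  shows "(wunit ((\<lambda>i. 0), u, r) :: widx \<Rightarrow> 'a::field) \<in> L"
proof -
  obtain N where "card u = 2 * N" using assms(1) by blast
  with assms(2) show ?thesis
  proof (induction N arbitrary: u)
    case 0
    then have "u = {}" using finite_subset[of u "Y1 m n"] by (auto simp: Y1_def)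
    then show ?case using wunit_Mset_in_L[OF assms(3) assms(3), of 0] by simp
  next
    case (Suc N)
    have "card u = Suc (Suc (2 * N))" using Suc.prems(2) by simp
    then obtain k l u' where u: "u = insert k (insert l u')" and "k \<noteq> l" "k \<notin> u'" "l \<notin> u'"
      and "card u' = 2 * N" by (auto simp: card_Suc_eq_finite)
    then have u': "u' \<subseteq> Y1 m n" "k \<in> Y1 m n" "l \<in> Y1 m n" using Suc.prems(1) by auto
    obtain j where j: "j \<in> Y0 m" "j \<noteq> r" using exists_other_Y0[OF assms(3)] by blast
    have "(wunit ((\<lambda>i. 0), u', r) :: widx \<Rightarrow> 'a) \<in> L" using Suc.IH u' \<open>card u' = 2 * N\<close> by blast
    then have "(wunit (unit_exp 1 r, u', r) :: widx \<Rightarrow> 'a) \<in> L"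
      using wunit_set_own_exp[of r "\<lambda>i. 0" u' 1] assms(3) u' piw_ge_3[OF assms(3)]
      by (simp add: mem_WBasis_iff Y_def)
    then have "(wunit (unit_exp 1 j, u', r) :: widx \<Rightarrow> 'a) \<in> L"
      using wunit_move_exp[of j r "unit_exp 1 r" u'] assms(3) j u' piw_ge_3[OF assms(3)]
      by (simp add: unit_exp_mem_WBasis Y_def)
    then show ?case unfolding u
      using wunit_adjoin_odd_pair j assms(3) u' \<open>k \<noteq> l\<close> \<open>k \<notin> u'\<close> \<open>l \<notin> u'\<close> by blast
  qed
qed

text \<open>Induction on the support of \<alpha>: a new exponent \<alpha>_i is added to x^(\<beta>) x^u D_r
  along \<beta> \<rightarrow> \<beta> + \<epsilon>_r \<rightarrow> \<beta> + \<epsilon>_i \<rightarrow> \<beta> + \<alpha>_i \<epsilon>_i.\<close>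

lemma wunit_even_own_exp_zero:
  assumes "finite S" and r: "r \<in> Y0 m" and const: "(wunit ((\<lambda>i. 0), u, r) :: widx \<Rightarrow> 'a::field) \<in> L"
  shows "(\<alpha>, u, r) \<in> WBasis p m n t \<Longrightarrow> \<alpha> r = 0 \<Longrightarrow> \<forall>i. i \<notin> S \<longrightarrow> \<alpha> i = 0 \<Longrightarrow>
           (wunit (\<alpha>, u, r) :: widx \<Rightarrow> 'a) \<in> L"
  using assms(1)
proof (induction S arbitrary: \<alpha> rule: finite_induct)
  case empty
  then have "\<alpha> = (\<lambda>i. 0)" by auto
  then show ?case using const by simp
next
  case (insert i S)
  show ?case
  proof (cases "\<alpha> i = 0")
    case True
    then have "\<forall>x. x \<notin> S \<longrightarrow> \<alpha> x = 0" using insert.prems(3) by (metis insert_iff)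
    then show ?thesis using insert.IH insert.prems(1,2) by blast
  next
    case False
    with insert.prems have i: "i \<in> Y0 m" "i \<noteq> r" "\<alpha> i \<le> piw p t i"
      by (auto simp: mem_WBasis_iff)
    have rY: "r \<in> Y m n" using r by (simp add: Y_def)
    have one: "1 \<le> piw p t r" "1 \<le> piw p t i" using piw_ge_3 r i(1) by force+
    have B0: "(\<alpha>(i := 0), u, r) \<in> WBasis p m n t"
      using fun_upd_mem_WBasis[OF insert.prems(1) i(1)] by simp
    have B: "(\<alpha>(i := 0, r := 1), u, r) \<in> WBasis p m n t" "(\<alpha>(i := 1), u, r) \<in> WBasis p m n t"
      using fun_upd_mem_WBasis[OF B0 r one(1)] fun_upd_mem_WBasis[OF insert.prems(1) i(1) one(2)] .
    have L0: "(wunit (\<alpha>(i := 0), u, r) :: widx \<Rightarrow> 'a) \<in> L"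
      using insert.prems(2,3) i(2) by (intro insert.IH[OF B0]) auto
    have L1: "(wunit (\<alpha>(i := 0, r := 1), u, r) :: widx \<Rightarrow> 'a) \<in> L"
      using wunit_set_own_exp[OF r B0 _ _ L0] i insert.prems(2) piw_ge_3[OF r] by simp
    have L2: "(wunit (\<alpha>(i := 1), u, r) :: widx \<Rightarrow> 'a) \<in> L"
      using wunit_move_exp[OF i(1) r i(2)[symmetric] B(1) _ _ L1] i insert.prems(2)
      by (simp add: fun_upd_twist fun_upd_idem)
    show ?thesis
      using wunit_raise_exp[OF i(1) rY i(2)[symmetric] B(2) _ i(3) L2] by simp
  qed
qed

lemma wunit_even_below_top:
  assumes "even (card u)" and r: "r \<in> Y0 m" and B: "(\<alpha>, u, r) \<in> WBasis p m n t"
    and "\<alpha> r < piw p t r"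
  shows "(wunit (\<alpha>, u, r) :: widx \<Rightarrow> 'a::field) \<in> L"
proof -
  have B0: "(\<alpha>(r := 0), u, r) \<in> WBasis p m n t" using B by (auto simp: mem_WBasis_iff)
  have supp: "\<forall>i. i \<notin> Y0 m \<longrightarrow> (\<alpha>(r := 0)) i = 0" using B by (simp add: mem_WBasis_iff)
  have "(wunit ((\<lambda>i. 0), u, r) :: widx \<Rightarrow> 'a) \<in> L"
    using B assms(1) r by (intro wunit_even_const) (auto simp: mem_WBasis_iff)
  from wunit_even_own_exp_zero[OF _ r this B0 _ supp]
  have "(wunit (\<alpha>(r := 0), u, r) :: widx \<Rightarrow> 'a) \<in> L" by (simp add: Y0_def fun_upd_def)
  from wunit_set_own_exp[OF r B0 _ assms(4) this] show ?thesis by simp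
qed

lemma wunit_even:
  assumes "even (card u)" and r: "r \<in> Y0 m" and B: "(\<alpha>, u, r) \<in> WBasis p m n t"
  shows "(wunit (\<alpha>, u, r) :: widx \<Rightarrow> 'a::field) \<in> L"
proof (cases "\<alpha> r < piw p t r")
  case True
  then show ?thesis using wunit_even_below_top assms by blast
next
  case False
  then have top: "\<alpha> r = piw p t r" using B r by (auto simp: mem_WBasis_iff)
  obtain j where j: "j \<in> Y0 m" "j \<noteq> r" using exists_other_Y0[OF r] by blast
  have pi: "3 \<le> piw p t r" "3 \<le> piw p t j" using piw_ge_3 r j by auto
  have rY: "r \<in> Y m n" "j \<in> Y m n" using r j by (auto simp: Y_def)
  let ?\<alpha>' = "\<alpha>(j := 1)"
  have B': "(?\<alpha>', u, r) \<in> WBasis p m n t" using B j pi by (intro fun_upd_mem_WBasis) auto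
  have "(?\<alpha>'(r := 0, j := 2), u, r) \<in> WBasis p m n t"
    using B r j pi by (intro fun_upd_mem_WBasis) auto
  then have L1: "(wunit (?\<alpha>'(r := 0, j := 2), u, r) :: widx \<Rightarrow> 'a) \<in> L"
    using j pi by (intro wunit_even_below_top[OF assms(1) r]) auto
  have "(?\<alpha>'(j := 2, r := piw p t r - 1), u, j) \<in> WBasis p m n t"
    using B r j pi rY by (intro fun_upd_mem_WBasis) (auto simp: mem_WBasis_iff)
  then have L2: "(wunit (?\<alpha>'(j := 2, r := piw p t r - 1), u, j) :: widx \<Rightarrow> 'a) \<in> L"
    using j pi by (intro wunit_even_below_top[OF assms(1) j(1)]) auto
  have L3: "(wunit (?\<alpha>', u, r) :: widx \<Rightarrow> 'a) \<in> L"
    using wunit_top_exp[OF j(1) r j(2)[symmetric] B' _ _ L1 L2] top j by simp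
  have "\<alpha> j \<le> piw p t j" using B j by (simp add: mem_WBasis_iff)
  from wunit_raise_exp[OF j(1) rY(1) j(2)[symmetric] B' _ this L3] show ?thesis by simp
qed

lemma wunit_odd:
  assumes "odd (card u)" and l: "l \<in> Y1 m n" and B: "(\<beta>, u, l) \<in> WBasis p m n t"
  shows "(wunit (\<beta>, u, l) :: widx \<Rightarrow> 'a::field) \<in> L"
proof -
  have u: "u \<subseteq> Y1 m n" using B by (simp add: mem_WBasis_iff)
  then have "finite u" by (rule finite_subset) (simp add: Y1_def)
  have "u \<noteq> {}" using assms(1) by auto
  obtain k where k: "k \<in> u" "l \<notin> u - {k}"
  proof (cases "l \<in> u")
    case True
    then show ?thesis using that[of l] by blast
  next
    case False
    then show ?thesis using that \<open>u \<noteq> {}\<close> by blast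
  qed
  let ?u' = "u - {k}"
  have even: "even (card ?u')" using k(1) assms(1) \<open>finite u\<close> by (simp add: card_Diff_singleton)
  have one: "1 \<in> Y0 m" using two_le_m by (simp add: Y0_def)
  have B': "(\<beta>, ?u', 1) \<in> WBasis p m n t" using B one by (auto simp: mem_WBasis_iff Y_def)
  have "k \<in> Y1 m n" using k(1) u by blast
  from wunit_adjoin_odd[OF one this l _ k(2) B' wunit_even[OF even one B']]
  have "(wunit (\<beta>, insert k ?u', l) :: widx \<Rightarrow> 'a) \<in> L" by simp
  then show ?thesis using k(1) by (simp add: insert_absorb)
qed

lemma wunit_if_even_index:
  assumes "c \<in> WBasis p m n t" "even_index m c"
  shows "(wunit c :: widx \<Rightarrow> 'a::field) \<in> L"
proof -
  obtain \<alpha> u r where c: "c = (\<alpha>, u, r)" by (metis prod_cases3)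
  have "r \<in> Y m n" using assms(1) by (simp add: c mem_WBasis_iff)
  then consider "r \<in> Y0 m" "r \<le> m" | "r \<in> Y1 m n" "\<not> r \<le> m"
    by (auto simp: Y_def Y0_def Y1_def)
  then show ?thesis
    using assms wunit_even[of u r \<alpha>] wunit_odd[of u r \<alpha>]
    by cases (simp_all add: c even_index_def tau_def)
qed

end

lemma card_deriv_mono:
  assumes "deriv_mono m r (\<beta>, v) (\<beta>', v') \<noteq> (0::'a::field)" "r \<in> Y m n" "finite v"
  shows "card v' + tau m r = card v"
proof (cases "r \<in> Y0 m")
  case True
  then show ?thesis using assms(1) by (auto simp: deriv_mono_def tau_def Y0_def split: if_splits)
next
  case False
  then have "r \<in> v" "v' = v - {r}" "\<not> r \<le> m"
    using assms(1,2) by (auto simp: deriv_mono_def Y_def Y0_def Y1_def split: if_splits)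
  moreover have "card v > 0" using \<open>r \<in> v\<close> assms(3) card_gt_0_iff by blast
  ultimately show ?thesis using assms(3) by (simp add: tau_def card_Diff_singleton)
qed

lemma mono_mul_nonzero:
  assumes "mono_mul p m t (\<alpha>, u) (\<beta>, v) (\<gamma>, w) \<noteq> (0::'a::field)"
  shows "(\<forall>i\<in>Y0 m. \<alpha> i + \<beta> i \<le> piw p t i) \<and> \<gamma> = (\<lambda>i. \<alpha> i + \<beta> i) \<and> u \<inter> v = {} \<and> w = u \<union> v"
  using assms by (auto simp: mono_mul_def split: if_splits)

lemma prelie_basis_support:
  assumes A: "(\<alpha>, u) \<in> ABasis p m n t" and B: "(\<beta>, v) \<in> ABasis p m n t" and r: "r \<in> Y m n" "s \<in> Y m n"
    and nz: "prelie_basis p m n t (\<alpha>, u, r) (\<beta>, v, s) c \<noteq> (0::'a::field)"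
  shows "\<exists>\<gamma> w. c = (\<gamma>, w, s) \<and> (\<gamma>, w, s) \<in> WBasis p m n t \<and> card w + tau m r = card u + card v"
proof -
  obtain \<gamma> w s' where c: "c = (\<gamma>, w, s')" by (metis prod_cases3)
  have "s' = s" and "(\<Sum>b\<in>ABasis p m n t. deriv_mono m r (\<beta>, v) b * mono_mul p m t (\<alpha>, u) b (\<gamma>, w)) \<noteq> (0::'a)"
    using nz by (auto simp: prelie_basis_def aderiv_amono[OF B] amul_amono[OF A] c aD_def split: if_splits)
  then obtain \<beta>' v' where bA: "(\<beta>', v') \<in> ABasis p m n t"
    and d: "deriv_mono m r (\<beta>, v) (\<beta>', v') \<noteq> (0::'a)" and "mono_mul p m t (\<alpha>, u) (\<beta>', v') (\<gamma>, w) \<noteq> (0::'a)"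
    by (metis (no_types, lifting) mult_eq_0_iff old.prod.exhaust sum.neutral)
  then have mm: "(\<forall>i\<in>Y0 m. \<alpha> i + \<beta>' i \<le> piw p t i) \<and> \<gamma> = (\<lambda>i. \<alpha> i + \<beta>' i) \<and> u \<inter> v' = {} \<and> w = u \<union> v'"
    and v': "v' \<subseteq> Y1 m n" by (auto dest: mono_mul_nonzero simp: mem_ABasis_iff)
  have fin: "finite u" "finite v" "finite v'"
    using A B v' by (auto simp: mem_ABasis_iff Y1_def intro: finite_subset)
  have "card v' + tau m r = card v" using card_deriv_mono[OF d r(1) fin(2)] .
  moreover have "card w = card u + card v'" using mm fin by (simp add: card_Un_disjoint)
  moreover have "(\<gamma>, w, s) \<in> WBasis p m n t" using mm A bA r(2) by (auto simp: mem_ABasis_iff mem_WBasis_iff)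
  ultimately show ?thesis using c \<open>s' = s\<close> by auto
qed

lemma bracket_basis_even_index:
  assumes a: "a \<in> WBasis p m n t" "even_index m a" and b: "b \<in> WBasis p m n t" "even_index m b"
    and nz: "bracket_basis p m n t a b c \<noteq> (0::'a::field)"
  shows "c \<in> WBasis p m n t \<and> even_index m c"
proof -
  obtain \<alpha> u r \<beta> v s where ab: "a = (\<alpha>, u, r)" "b = (\<beta>, v, s)" by (metis prod_cases3)
  have A: "(\<alpha>, u) \<in> ABasis p m n t" "r \<in> Y m n" and B: "(\<beta>, v) \<in> ABasis p m n t" "s \<in> Y m n"
    using a b ab by (auto simp: WBasis_def)
  have par: "even (card u + tau m r)" "even (card v + tau m s)" using a b ab by (simp_all add: even_index_def)
  have "prelie_basis p m n t (\<alpha>, u, r) (\<beta>, v, s) c \<noteq> (0::'a) \<or> prelie_basis p m n t (\<beta>, v, s) (\<alpha>, u, r) c \<noteq> (0::'a)"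
    using nz by (auto simp: ab bracket_basis_prelie)
  then show ?thesis
  proof
    assume "prelie_basis p m n t (\<alpha>, u, r) (\<beta>, v, s) c \<noteq> (0::'a)"
    then obtain \<gamma> w where "c = (\<gamma>, w, s)" "(\<gamma>, w, s) \<in> WBasis p m n t"
      and "card w + tau m r = card u + card v"
      using prelie_basis_support[OF A(1) B(1) A(2) B(2)] by blast
    moreover have "even (card w + tau m s)" using calculation(3) par by presburger
    ultimately show ?thesis by (simp add: even_index_def)
  next
    assume "prelie_basis p m n t (\<beta>, v, s) (\<alpha>, u, r) c \<noteq> (0::'a)"
    then obtain \<gamma> w where "c = (\<gamma>, w, r)" "(\<gamma>, w, r) \<in> WBasis p m n t"
      and "card w + tau m s = card v + card u"
      using prelie_basis_support[OF B(1) A(1) B(2) A(2)] by blast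
    moreover have "even (card w + tau m r)" using calculation(3) par by presburger
    ultimately show ?thesis by (simp add: even_index_def)
  qed
qed

lemma Weven_iff: "X \<in> Weven p m n t \<longleftrightarrow> (\<forall>c. X c \<noteq> 0 \<longrightarrow> c \<in> WBasis p m n t \<and> even_index m c)"
  unfolding Weven_def Wsp_def even_index_def by (auto split: prod.splits)

lemma WevenI: "(\<And>c. X c \<noteq> 0 \<Longrightarrow> c \<in> WBasis p m n t \<and> even_index m c) \<Longrightarrow> X \<in> Weven p m n t"
  unfolding Weven_iff by blast

lemma WevenD: "X \<in> Weven p m n t \<Longrightarrow> X c \<noteq> 0 \<Longrightarrow> c \<in> WBasis p m n t \<and> even_index m c"
  unfolding Weven_iff by blast

lemma wbracket_Weven:
  assumes X: "X \<in> Weven p m n t" and Z: "Z \<in> Weven p m n t"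
  shows "wbracket p m n t X Z \<in> Weven p m n t"
proof (rule WevenI)
  fix c assume "wbracket p m n t X Z c \<noteq> 0"
  then obtain a b where "a \<in> WBasis p m n t" "b \<in> WBasis p m n t"
    and nz: "X a * Z b * bracket_basis p m n t a b c \<noteq> 0"
    unfolding wbracket_def by (metis (no_types, lifting) sum.neutral)
  moreover have "even_index m a" "even_index m b" using nz WevenD[OF X] WevenD[OF Z] by auto
  ultimately show "c \<in> WBasis p m n t \<and> even_index m c"
    using bracket_basis_even_index by (metis mult_eq_0_iff)
qed

lemma lie_gen_subset_Weven:
  assumes "S \<subseteq> Weven p m n t"
  shows "lie_gen p m n t S \<subseteq> Weven p m n t"
proof
  fix X assume "X \<in> lie_gen p m n t S"
  then show "X \<in> Weven p m n t"
  proof induction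
    case (gen_add X Z)
    then show ?case by (intro WevenI) (metis WevenD add.left_neutral add.right_neutral)
  next
    case (gen_smult X k)
    then show ?case by (intro WevenI) (metis WevenD mult_zero_right)
  qed (use assms wbracket_Weven in \<open>auto intro: WevenI\<close>)
qed

lemma smult_wunit_Weven:
  "a \<in> WBasis p m n t \<Longrightarrow> even_index m a \<Longrightarrow> (\<lambda>c. k * wunit a c) \<in> Weven p m n t"
  by (rule WevenI) (auto simp: wunit_def split: if_splits)

lemma Weven_eq_sum_wunit:
  assumes "X \<in> Weven p m n t"
  shows "X = (\<lambda>c. \<Sum>a\<in>{a \<in> WBasis p m n t. even_index m a}. X a * wunit a c)"
proof
  fix c
  have "(\<Sum>a\<in>{a \<in> WBasis p m n t. even_index m a}. X a * wunit a c)
      = (if c \<in> WBasis p m n t \<and> even_index m c then X c else 0)"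
    by (simp add: wunit_def if_distrib[where f = "\<lambda>z. _ * z"] sum.delta' finite_WBasis cong: if_cong)
  then show "X c = (\<Sum>a\<in>{a \<in> WBasis p m n t. even_index m a}. X a * wunit a c)"
    using WevenD[OF assms, of c] by auto
qed

context witt_setting
begin

lemma generators_subset_Weven: "generators \<subseteq> Weven p m n t"
proof
  fix X :: "widx \<Rightarrow> 'a" assume "X \<in> generators"
  then consider (M) q i j where "X = aD (dpow q i) j" "i \<in> Y0 m" "j \<in> Y0 m" "q \<le> piw p t i"
    | (N) i k l where "X = aD (amul p m n t (xgen m i) (xgen m k)) l" "i \<in> Y0 m" "k \<in> Y1 m n" "l \<in> Y1 m n"
    | (P) i k l where "X = aD (amul p m n t (xgen m k) (xgen m l)) i" "i \<in> Y0 m" "k \<in> Y1 m n" "l \<in> Y1 m n"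
    unfolding Mset_def Nset_def Pset_def by blast
  then show "X \<in> Weven p m n t"
  proof cases
    case M
    then show ?thesis using smult_wunit_Weven[of "(unit_exp q i, {}, j)" p m n t 1]
      by (simp add: aD_dpow unit_exp_mem_WBasis Y_def even_index_def tau_def Y0_Y1_bounds)
  next
    case N
    then show ?thesis using smult_wunit_Weven[of "(unit_exp 1 i, {k}, l)" p m n t 1] piw_ge_3[of i]
      by (simp add: aD_xgen_even_odd unit_exp_mem_WBasis Y_def even_index_def tau_def Y0_Y1_bounds)
  next
    case P
    show ?thesis
    proof (cases "k = l")
      case True
      then show ?thesis using P by (simp add: aD_xgen_odd_odd Weven_iff)
    next
      case False
      have "((\<lambda>j. 0), {k, l}, i) \<in> WBasis p m n t" using P by (auto simp: mem_WBasis_iff Y_def)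
      moreover have "even_index m ((\<lambda>j. 0), {k, l}, i)"
        using P False by (simp add: even_index_def tau_def Y0_Y1_bounds)
      ultimately show ?thesis using P False smult_wunit_Weven by (simp add: aD_xgen_odd_odd)
    qed
  qed
qed

lemma Weven_subset_L: "Weven p m n t \<subseteq> L"
proof
  fix X :: "widx \<Rightarrow> 'a" assume X: "X \<in> Weven p m n t"
  have sum_in_L: "(\<lambda>c. \<Sum>a\<in>{a \<in> WBasis p m n t. even_index m a}. X a * wunit a c) \<in> L"
  proof (rule lie_gen_sum_wunit)
    show "finite {a \<in> WBasis p m n t. even_index m a}" using finite_WBasis by simp
  qed (simp add: wunit_if_even_index)
  show "X \<in> L" by (subst Weven_eq_sum_wunit[OF X]) (rule sum_in_L)
qed

end

theorem proposition2p2p1: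
  fixes p m n :: nat and t :: "nat \<Rightarrow> nat"
  assumes "CHAR('a::field) = p" and "prime p" and "p > 3"
    and "m \<ge> 3" and "n \<ge> 3"
    and "\<forall>i\<in>Y0 m. t i > 0"
  shows "lie_gen p m n t (Mset p m n t \<union> Nset p m n t \<union> Pset p m n t)
           = (Weven p m n t :: (widx \<Rightarrow> 'a) set)"
proof -
  have "3 \<le> piw p t i" if "i \<in> Y0 m" for i
  proof -
    have "p \<le> p ^ t i" using assms(3,6) that by (intro self_le_power) auto
    then show ?thesis using assms(3) by (simp add: piw_def)
  qed
  then interpret witt_setting p m n t using assms(4) by unfold_locales auto
  show ?thesis using lie_gen_subset_Weven[OF generators_subset_Weven] Weven_subset_L by blast
qed

end
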